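(* Let $\sigma:\mathbb R^n\to\mathbb R^{n\times m}$ be of class $C^2$, with columns $\sigma_1,\dots,\sigma_m$, and let $u:\mathbb R^n\to\mathbb R$ be of class $C^3$. Let $\bar x\in\mathbb R^n$ be a point such that $\nabla u(\bar x)\cdot\sigma_i(\bar x)=0$ for all $i=1,\dots,m$, and suppose that $$\max_{a_1,a_2\in B_1(0)}\Big\{ -\mathrm{Tr}\big(D^2u\, \sigma(a_1+a_2)\otimes\sigma(a_1+a_2) (\bar x)\big)-\big(D(\sigma (a_1+a_2))\,\sigma (a_1+a_2)+[\sigma a_1,\sigma a_2]\big)(\bar x)\cdot\nabla u(\bar x)\Big\}>0.$$ Then the target $\{x:u(x)\leq u(\bar x)\}$ is small time locally attainable (STLA) by the system $\dot x_t=\sigma(x_t)a_t$ at $\bar x$.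
   Context: The control system is $\dot x_t=\sigma(x_t)a_t$, $x_0\in\mathbb R^n$, with controls $a_\cdot:[0,+\infty)\to B_1(0)=\{a\in\mathbb R^m:|a|\le 1\}$ piecewise continuous. For $a\in\mathbb R^m$, $\sigma a$ denotes the vector field $x\mapsto\sigma(x)a$, and $D(\sigma a)$ its Jacobian matrix. For $C^1$ vector fields $f,g$, the Lie bracket is $[f,g](x)=Dg(x)f(x)-Df(x)g(x)$, where $Df=(\partial_{x_j}f_i)_{i,j}$ is the Jacobian. For $v\in\mathbb R^n$, $\mathrm{Tr}(D^2u\, v\otimes v)=D^2u\,v\cdot v$. A target $\mathbf T=\{x:u(x)\le u(\bar x)\}$ is STLA at $\bar x$ if for every $t>0$ the point $\bar x$ lies in the interior of the set of initial points from which some admissible trajectory of the system reaches $\mathbf T$ in time less than $t$. *)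

theory Defs
  imports "HOL-Analysis.Analysis"
begin

text \<open>Points of R^n are vectors real^'n, controls are in real^'m, and
  sigma(x) is the n x m matrix real^'m^'n (rows indexed by 'n, columns by 'm).\<close>

definition partial :: "'n::finite \<Rightarrow> (real^'n \<Rightarrow> real) \<Rightarrow> real^'n \<Rightarrow> real" where
  "partial j g x = deriv (\<lambda>t. g (x + t *\<^sub>R axis j 1)) 0"

fun Ck :: "nat \<Rightarrow> (real^'n::finite \<Rightarrow> real) \<Rightarrow> bool" where
  "Ck 0 g = continuous_on UNIV g"
| "Ck (Suc k) g = ((\<forall>x. g differentiable (at x)) \<and> (\<forall>j. Ck k (partial j g)))"

definition grad :: "(real^'n::finite \<Rightarrow> real) \<Rightarrow> real^'n \<Rightarrow> real^'n" where
  "grad g x = (\<chi> j. partial j g x)"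

definition hess :: "(real^'n::finite \<Rightarrow> real) \<Rightarrow> real^'n \<Rightarrow> real^'n^'n" where
  "hess g x = (\<chi> i j. partial i (partial j g) x)"

definition jac :: "(real^'n::finite \<Rightarrow> real^'n) \<Rightarrow> real^'n \<Rightarrow> real^'n^'n" where
  "jac f x = (\<chi> i j. partial j (\<lambda>y. f y $ i) x)"

definition lie_bracket :: "(real^'n::finite \<Rightarrow> real^'n) \<Rightarrow> (real^'n \<Rightarrow> real^'n) \<Rightarrow> real^'n \<Rightarrow> real^'n" where
  "lie_bracket f g x = jac g x *v f x - jac f x *v g x"

definition vf :: "(real^'n::finite \<Rightarrow> real^'m::finite^'n) \<Rightarrow> real^'m \<Rightarrow> real^'n \<Rightarrow> real^'n" where
  "vf \<sigma> a x = \<sigma> x *v a"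

definition piecewise_continuous :: "(real \<Rightarrow> 'b::real_normed_vector) \<Rightarrow> bool" where
  "piecewise_continuous a \<longleftrightarrow>
     (\<forall>T>0. \<exists>S. finite S \<and> S \<subseteq> {0..T} \<and> continuous_on ({0..T} - S) a \<and>
        (\<forall>s\<in>S. (s > 0 \<longrightarrow> (\<exists>l. (a \<longlongrightarrow> l) (at_left s))) \<and>
                (\<exists>r. (a \<longlongrightarrow> r) (at_right s))))"

definition admissible :: "(real \<Rightarrow> real^'m::finite) \<Rightarrow> bool" where
  "admissible a \<longleftrightarrow> (\<forall>t\<ge>0. norm (a t) \<le> 1) \<and> piecewise_continuous a"

definition trajectory ::
  "(real^'n::finite \<Rightarrow> real^'m::finite^'n) \<Rightarrow> (real \<Rightarrow> real^'m) \<Rightarrow> real^'n \<Rightarrow> real \<Rightarrow> (real \<Rightarrow> real^'n) \<Rightarrow> bool" where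
  "trajectory \<sigma> a x0 \<tau> x \<longleftrightarrow> x 0 = x0 \<and>
     (\<forall>t\<in>{0..\<tau>}. ((\<lambda>s. \<sigma> (x s) *v a s) has_integral (x t - x0)) {0..t})"

definition reach_set ::
  "(real^'n::finite \<Rightarrow> real^'m::finite^'n) \<Rightarrow> (real^'n) set \<Rightarrow> real \<Rightarrow> (real^'n) set" where
  "reach_set \<sigma> T t = {x0. \<exists>a. admissible a \<and> (\<exists>\<tau>. 0 \<le> \<tau> \<and> \<tau> < t \<and>
        (\<exists>x. trajectory \<sigma> a x0 \<tau> x \<and> x \<tau> \<in> T))}"

definition STLA :: "(real^'n::finite \<Rightarrow> real^'m::finite^'n) \<Rightarrow> (real^'n) set \<Rightarrow> real^'n \<Rightarrow> bool" where
  "STLA \<sigma> T xb \<longleftrightarrow> (\<forall>t>0. xb \<in> interior (reach_set \<sigma> T t))"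

end

theory Submission
  imports Defs
begin

(* Switching from the constant control a1 to a2 at time s, the trajectory from xb ends at
  xb + s v + s^2 w + o(s^2), where, evaluated at xb, v = sigma (a1 + a2) and
  w = D(sigma a1) sigma a1 / 2 + D(sigma a2) sigma a1 + D(sigma a2) sigma a2 / 2.
  Since grad u . v = 0, Taylor's formula gives
  u(endpoint) - u(xb) = s^2 (grad u . w + D^2u v . v / 2) + o(s^2),
  and this coefficient is negative by hypothesis, because
  2 w = D(sigma (a1 + a2)) v + [sigma a1, sigma a2].
  So for small s the endpoint lies strictly inside the target; as it depends continuously on the
  initial point, the same control steers a whole neighbourhood of xb into the target within time 2 s.
  The flows are obtained by Picard iteration for the fields extended off a ball by the closest-point
  projection. *)

lemma Ck_Suc_imp_Ck: "Ck (Suc k) g \<Longrightarrow> Ck k g"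
proof (induction k arbitrary: g)
  case 0
  then show ?case
    by (auto intro: continuous_at_imp_continuous_on differentiable_imp_continuous_within)
qed simp

lemma partial_eq_derivative:
  assumes "(g has_derivative D) (at x)"
  shows "partial j g x = D (axis j 1)"
proof -
  have "((\<lambda>t. x + t *\<^sub>R axis j 1) has_derivative (\<lambda>t. t *\<^sub>R axis j 1)) (at (0::real))"
    by (intro derivative_eq_intros) auto
  from has_derivative_compose[OF this] assms
  have "((\<lambda>t. g (x + t *\<^sub>R axis j 1)) has_derivative (\<lambda>t. D (t *\<^sub>R axis j 1))) (at 0)"
    by simp
  moreover have "(\<lambda>t. D (t *\<^sub>R axis j 1)) = (*) (D (axis j 1))"
    using linear.scaleR[OF has_derivative_linear[OF assms]] by (auto simp: fun_eq_iff)
  ultimately show ?thesis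
    unfolding partial_def by (intro DERIV_imp_deriv) (simp add: has_field_derivative_def)
qed

lemma grad_has_derivative:
  fixes g :: "real^'n \<Rightarrow> real"
  assumes "g differentiable (at x)"
  shows "(g has_derivative (\<lambda>h. grad g x \<bullet> h)) (at x)"
proof -
  obtain D where D: "(g has_derivative D) (at x)"
    using assms differentiable_def by blast
  have "D h = grad g x \<bullet> h" for h
  proof -
    have "D h = D (\<Sum>j\<in>UNIV. h $ j *\<^sub>R axis j 1)"
      using basis_expansion[of h] by (simp add: scalar_mult_eq_scaleR)
    also have "\<dots> = (\<Sum>j\<in>UNIV. h $ j * D (axis j 1))"
      using has_derivative_linear[OF D] by (simp add: linear_sum linear.scaleR)
    finally show ?thesis
      by (simp add: grad_def partial_eq_derivative[OF D] inner_vec_def mult.commute)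
  qed
  then have "D = (\<lambda>h. grad g x \<bullet> h)"
    by auto
  then show ?thesis
    using D by simp
qed

lemma jac_mult_nth: "(jac f x *v h) $ i = grad (\<lambda>y. f y $ i) x \<bullet> h"
  by (simp add: jac_def grad_def matrix_vector_mult_def inner_vec_def mult.commute)

lemma jac_has_derivative:
  fixes f :: "real^'n \<Rightarrow> real^'n"
  assumes "\<And>i. (\<lambda>y. f y $ i) differentiable (at x)"
  shows "(f has_derivative (\<lambda>h. jac f x *v h)) (at x)"
proof (subst has_derivative_componentwise_within, intro ballI)
  fix b :: "real^'n"
  assume "b \<in> Basis"
  then obtain i where b: "b = axis i 1"
    by (auto simp: Basis_vec_def)
  have "((\<lambda>y. f y $ i) has_derivative (\<lambda>h. (jac f x *v h) $ i)) (at x)"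
    unfolding jac_mult_nth by (rule grad_has_derivative[OF assms])
  then show "((\<lambda>y. f y \<bullet> b) has_derivative (\<lambda>h. (jac f x *v h) \<bullet> b)) (at x)"
    by (simp add: b inner_axis)
qed

lemma jac_grad: "jac (grad u) x = transpose (hess u x)"
  by (simp add: jac_def grad_def hess_def transpose_def)

lemma C1_lipschitz_on:
  fixes g :: "real^'n \<Rightarrow> real"
  assumes "Ck 1 g" "compact K" "convex K"
  obtains B where "B-lipschitz_on K g"
proof -
  have diff: "\<And>x. g differentiable (at x)" and partial_cont: "\<And>j. continuous_on UNIV (partial j g)"
    using assms(1) by simp_all
  have "continuous_on UNIV (grad g)"
    unfolding grad_def by (rule continuous_on_vec_lambda[OF partial_cont])
  then obtain B where B: "\<And>x. x \<in> K \<Longrightarrow> norm (grad g x) \<le> B"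
    using continuous_on_compact_bound[OF assms(2) continuous_on_subset[OF _ subset_UNIV]] by blast
  have "norm (g x - g y) \<le> B * norm (x - y)" if "x \<in> K" "y \<in> K" for x y
  proof (rule differentiable_bound[OF assms(3) _ _ that])
    fix z
    assume "z \<in> K"
    show "(g has_derivative (\<lambda>h. grad g z \<bullet> h)) (at z within K)"
      using grad_has_derivative[OF diff] has_derivative_at_withinI by blast
    show "onorm (\<lambda>h. grad g z \<bullet> h) \<le> B"
    proof (rule onorm_le)
      fix h
      have "norm (grad g z \<bullet> h) \<le> norm (grad g z) * norm h"
        by (simp add: Cauchy_Schwarz_ineq2)
      also have "\<dots> \<le> B * norm h"
        using B[OF \<open>z \<in> K\<close>] by (simp add: mult_right_mono)
      finally show "norm (grad g z \<bullet> h) \<le> B * norm h" .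
    qed
  qed
  then have "(max B 0)-lipschitz_on K g"
    by (intro lipschitz_onI) (simp_all add: dist_norm,
        meson max.cobounded1 mult_right_mono norm_ge_zero order_trans)
  then show ?thesis
    by (rule that)
qed

lemma norm_matrix_vector_mult_le:
  fixes A :: "real^'n^'m"
  shows "norm (A *v x) \<le> (\<Sum>i\<in>UNIV. \<Sum>j\<in>UNIV. \<bar>A $ i $ j\<bar>) * norm x"
  using onorm[OF matrix_vector_mul_bounded_linear, of A x] onorm_le_matrix_component_sum[of A]
  by (meson mult_right_mono norm_ge_zero order_trans)

lemma jac_add:
  fixes f g :: "real^'n \<Rightarrow> real^'n"
  assumes "\<And>i. (\<lambda>y. f y $ i) differentiable (at x)" "\<And>i. (\<lambda>y. g y $ i) differentiable (at x)"
  shows "jac (\<lambda>y. f y + g y) x = jac f x + jac g x"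
proof -
  have "partial j (\<lambda>y. f y $ i + g y $ i) x = partial j (\<lambda>y. f y $ i) x + partial j (\<lambda>y. g y $ i) x"
    for i j
    using partial_eq_derivative[OF has_derivative_add[OF grad_has_derivative grad_has_derivative],
        OF assms(1,2)]
    by (simp add: inner_axis grad_def)
  then show ?thesis
    by (simp add: jac_def vec_eq_iff)
qed

lemma inner_matrix_vector_mult_eq_0:
  fixes A :: "real^'m^'n"
  assumes "\<And>i. g \<bullet> column i A = 0"
  shows "g \<bullet> (A *v a) = 0"
  unfolding matrix_mult_sum using assms by (simp add: inner_sum_right scalar_mult_eq_scaleR)

context
  fixes \<sigma> :: "real^'n \<Rightarrow> real^'m^'n"
  assumes sigma_C1: "\<forall>i j. Ck 1 (\<lambda>x. \<sigma> x $ i $ j)"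
begin

lemma vf_nth_differentiable: "(\<lambda>y. vf \<sigma> a y $ i) differentiable (at x)"
proof -
  have "(\<lambda>y. \<sigma> y $ i $ k) differentiable (at x)" for k
    using sigma_C1 by simp
  then show ?thesis
    by (simp add: vf_def matrix_vector_mult_def)
qed

lemma vf_has_derivative: "(vf \<sigma> a has_derivative (\<lambda>h. jac (vf \<sigma> a) x *v h)) (at x)"
  by (rule jac_has_derivative[OF vf_nth_differentiable])

lemma jac_vf_add: "jac (vf \<sigma> (a + b)) x = jac (vf \<sigma> a) x + jac (vf \<sigma> b) x"
proof -
  have "vf \<sigma> (a + b) = (\<lambda>y. vf \<sigma> a y + vf \<sigma> b y)"
    by (simp add: vf_def matrix_vector_right_distrib fun_eq_iff)
  then show ?thesis
    using jac_add[OF vf_nth_differentiable vf_nth_differentiable] by simp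
qed

lemma vf_uniformly_lipschitz_bounded:
  assumes "compact K" "convex K"
  obtains L M where "\<And>a. norm a \<le> 1 \<Longrightarrow> L-lipschitz_on K (vf \<sigma> a)"
    and "\<And>a y. norm a \<le> 1 \<Longrightarrow> y \<in> K \<Longrightarrow> norm (vf \<sigma> a y) \<le> M"
proof -
  have "\<forall>i k. \<exists>B. B-lipschitz_on K (\<lambda>x. \<sigma> x $ i $ k)"
    using C1_lipschitz_on[OF _ assms] sigma_C1 by metis
  then obtain B where B: "\<And>i k. (B i k)-lipschitz_on K (\<lambda>x. \<sigma> x $ i $ k)"
    by metis
  have "continuous_on K (\<lambda>y. \<Sum>i\<in>UNIV. \<Sum>k\<in>UNIV. \<bar>\<sigma> y $ i $ k\<bar>)"
    using sigma_C1
    by (intro continuous_intros continuous_at_imp_continuous_on ballI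
        differentiable_imp_continuous_within)
      simp
  then obtain M where M: "\<And>y. y \<in> K \<Longrightarrow> norm (\<Sum>i\<in>UNIV. \<Sum>k\<in>UNIV. \<bar>\<sigma> y $ i $ k\<bar>) \<le> M"
    using continuous_on_compact_bound[OF assms(1)] by blast
  show ?thesis
  proof
    fix a :: "real^'m"
    assume a: "norm a \<le> 1"
    show "(\<Sum>i\<in>UNIV. \<Sum>k\<in>UNIV. B i k)-lipschitz_on K (vf \<sigma> a)"
    proof (rule lipschitz_onI)
      fix y z
      assume "y \<in> K" "z \<in> K"
      have "dist (vf \<sigma> a y) (vf \<sigma> a z) = norm ((\<sigma> y - \<sigma> z) *v a)"
        by (simp add: vf_def dist_norm matrix_vector_mult_diff_rdistrib)
      also have "\<dots> \<le> (\<Sum>i\<in>UNIV. \<Sum>k\<in>UNIV. \<bar>\<sigma> y $ i $ k - \<sigma> z $ i $ k\<bar>) * norm a"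
        using norm_matrix_vector_mult_le[of "\<sigma> y - \<sigma> z" a] by simp
      also have "\<dots> \<le> (\<Sum>i\<in>UNIV. \<Sum>k\<in>UNIV. \<bar>\<sigma> y $ i $ k - \<sigma> z $ i $ k\<bar>)"
        using a by (simp add: mult_right_le_one_le sum_nonneg)
      also have "\<dots> \<le> (\<Sum>i\<in>UNIV. \<Sum>k\<in>UNIV. B i k * dist y z)"
        using lipschitz_onD[OF B \<open>y \<in> K\<close> \<open>z \<in> K\<close>] by (intro sum_mono) (simp add: dist_real_def)
      finally show "dist (vf \<sigma> a y) (vf \<sigma> a z) \<le> (\<Sum>i\<in>UNIV. \<Sum>k\<in>UNIV. B i k) * dist y z"
        by (simp add: sum_distrib_right)
    next
      show "0 \<le> (\<Sum>i\<in>UNIV. \<Sum>k\<in>UNIV. B i k)"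
        using lipschitz_on_nonneg[OF B] by (simp add: sum_nonneg)
    qed
  next
    fix a :: "real^'m" and y
    assume "norm a \<le> 1" "y \<in> K"
    have "norm (vf \<sigma> a y) \<le> (\<Sum>i\<in>UNIV. \<Sum>k\<in>UNIV. \<bar>\<sigma> y $ i $ k\<bar>) * norm a"
      unfolding vf_def by (rule norm_matrix_vector_mult_le)
    also have "\<dots> \<le> (\<Sum>i\<in>UNIV. \<Sum>k\<in>UNIV. \<bar>\<sigma> y $ i $ k\<bar>)"
      using \<open>norm a \<le> 1\<close> by (simp add: mult_right_le_one_le sum_nonneg)
    also have "\<dots> \<le> M"
      using abs_ge_self M[OF \<open>y \<in> K\<close>] unfolding real_norm_def by (rule order_trans)
    finally show "norm (vf \<sigma> a y) \<le> M" .
  qed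
qed

lemma jac_sum_plus_lie_bracket:
  fixes a1 a2 :: "real^'m"
  defines "f \<equiv> vf \<sigma> a1" and "g \<equiv> vf \<sigma> a2"
  shows "jac (vf \<sigma> (a1 + a2)) x *v (\<sigma> x *v (a1 + a2)) + lie_bracket f g x
    = 2 *\<^sub>R ((1/2) *\<^sub>R (jac f x *v f x) + jac g x *v f x + (1/2) *\<^sub>R (jac g x *v g x))"
proof -
  have "\<sigma> x *v (a1 + a2) = f x + g x"
    by (simp add: f_def g_def vf_def matrix_vector_right_distrib)
  then show ?thesis
    unfolding jac_vf_add lie_bracket_def f_def[symmetric] g_def[symmetric]
    by (simp add: algebra_simps scaleR_2)
qed

end

section \<open>Local flows by Picard iteration\<close>

lemma integral_lipschitz_comp_bcontfun:
  fixes h :: "'a::euclidean_space \<Rightarrow> 'a" and y z :: "real \<Rightarrow>\<^sub>C 'a"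
  assumes "L-lipschitz_on UNIV h" "0 \<le> t"
  shows "norm (integral {0..t} (\<lambda>r. h (y r)) - integral {0..t} (\<lambda>r. h (z r))) \<le> L * dist y z * t"
proof -
  have cont: "continuous_on {0..t} (\<lambda>r. h (w r))" for w :: "real \<Rightarrow>\<^sub>C 'a"
    by (rule continuous_on_compose2[OF lipschitz_on_continuous_on[OF assms(1)]]) auto
  have "integral {0..t} (\<lambda>r. h (y r)) - integral {0..t} (\<lambda>r. h (z r)) =
      integral {0..t} (\<lambda>r. h (y r) - h (z r))"
    by (intro integral_diff[symmetric] integrable_continuous_real cont)
  also have "norm \<dots> \<le> L * dist y z * (t - 0)"
  proof (rule integral_bound)
    show "continuous_on {0..t} (\<lambda>r. h (y r) - h (z r))"
      by (intro continuous_intros cont)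
    fix r
    have "norm (h (y r) - h (z r)) \<le> L * dist (y r) (z r)"
      using lipschitz_onD[OF assms(1)] by (simp add: dist_norm)
    also have "\<dots> \<le> L * dist y z"
      using dist_bounded lipschitz_on_nonneg[OF assms(1)] by (rule mult_left_mono)
    finally show "norm (h (y r) - h (z r)) \<le> L * dist y z" .
  qed (use assms(2) in auto)
  finally show ?thesis
    by simp
qed

(* Clamping time to [0, T] lets the Picard map act on the complete space of bounded continuous
  functions on the whole real line. *)
definition picard_operator :: "('a::euclidean_space \<Rightarrow> 'a) \<Rightarrow> real \<Rightarrow> 'a \<Rightarrow> (real \<Rightarrow>\<^sub>C 'a) \<Rightarrow> real \<Rightarrow>\<^sub>C 'a"
  where "picard_operator h T x0 y = Bcontfun (\<lambda>t. x0 + integral {0..clamp 0 T t} (\<lambda>r. h (y r)))"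

lemma picard_operator_apply:
  fixes h :: "'a::euclidean_space \<Rightarrow> 'a"
  assumes "L-lipschitz_on UNIV h"
  shows "picard_operator h T x0 y t = x0 + integral {0..clamp 0 T t} (\<lambda>r. h (y r))"
proof -
  define I where "I s = integral {0..s} (\<lambda>r. h (y r))" for s
  have "continuous_on S (\<lambda>r. h (y r))" for S
    by (rule continuous_on_compose2[OF lipschitz_on_continuous_on[OF assms]]) auto
  then have "(I has_vector_derivative h (y s)) (at s within {0..T})" if "s \<in> {0..T}" for s
    unfolding I_def by (rule integral_has_vector_derivative[OF _ that])
  then have "continuous_on (cbox 0 T) I"
    unfolding cbox_interval continuous_on_eq_continuous_within
    using has_vector_derivative_continuous by blast
  then have cont: "continuous_on (cbox 0 T) (\<lambda>s. x0 + I s)"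
    by (intro continuous_intros)
  have "(\<lambda>t. x0 + I (clamp 0 T t)) \<in> bcontfun"
    unfolding bcontfun_def
    using clamp_continuous_on[OF cont]
      clamp_bounded[OF compact_imp_bounded[OF compact_continuous_image[OF cont compact_cbox]]]
    by blast
  then show ?thesis
    by (simp add: picard_operator_def I_def Bcontfun_inverse)
qed

lemma dist_picard_operator_le:
  fixes h :: "'a::euclidean_space \<Rightarrow> 'a"
  assumes lip: "L-lipschitz_on UNIV h" and T: "0 \<le> T" "L * T \<le> 1/2"
  shows "dist (picard_operator h T x0 y) (picard_operator h T z0 z)
      \<le> norm (x0 - z0) + 1/2 * dist y z"
proof (rule dist_bound)
  fix t
  define c where "c = clamp 0 T t"
  have c: "c \<in> {0..T}"
    using clamp_in_interval[of 0 T t] T unfolding c_def by simp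
  define D where "D = integral {0..c} (\<lambda>r. h (y r)) - integral {0..c} (\<lambda>r. h (z r))"
  have "picard_operator h T x0 y t - picard_operator h T z0 z t = (x0 - z0) + D"
    unfolding picard_operator_apply[OF lip] D_def c_def by simp
  then have "dist (picard_operator h T x0 y t) (picard_operator h T z0 z t)
      \<le> norm (x0 - z0) + norm D"
    by (metis dist_norm norm_triangle_ineq)
  also have "norm D \<le> L * dist y z * c"
    using integral_lipschitz_comp_bcontfun[OF lip] c unfolding D_def by simp
  also have "\<dots> \<le> L * dist y z * T"
    using c lipschitz_on_nonneg[OF lip] by (intro mult_left_mono) auto
  also have "\<dots> \<le> 1/2 * dist y z"
    using T(2) by (metis mult.commute mult.left_commute mult_right_mono zero_le_dist)
  finally show "dist (picard_operator h T x0 y t) (picard_operator h T z0 z t)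
      \<le> norm (x0 - z0) + 1/2 * dist y z"
    by simp
qed

lemma picard_flow_exists:
  fixes h :: "'a::euclidean_space \<Rightarrow> 'a"
  assumes lip: "L-lipschitz_on UNIV h" and T: "0 < T" "L * T \<le> 1/2"
  obtains Y where "\<And>x0. Y x0 0 = x0"
    and "\<And>x0 t. t \<in> {0..T} \<Longrightarrow> (Y x0 has_vector_derivative h (Y x0 t)) (at t within {0..T})"
    and "\<And>t. 2-lipschitz_on UNIV (\<lambda>x0. Y x0 t)"
proof -
  note contraction = dist_picard_operator_le[OF lip less_imp_le[OF T(1)] T(2)]
  have "\<exists>y. picard_operator h T x0 y = y" for x0
    using banach_fix_type[of "1/2" "picard_operator h T x0"] contraction[of x0 _ x0] by auto
  then obtain F where F: "\<And>x0. picard_operator h T x0 (F x0) = F x0"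
    by metis
  have F_eq: "F x0 t = x0 + integral {0..t} (\<lambda>r. h (F x0 r))" if "t \<in> {0..T}" for x0 t
    using picard_operator_apply[OF lip, of T x0 "F x0" t] F[of x0] that by simp
  show ?thesis
  proof
    show "F x0 0 = x0" for x0
      using F_eq[of 0 x0] T by simp
    show "(F x0 has_vector_derivative h (F x0 t)) (at t within {0..T})" if "t \<in> {0..T}" for x0 t
    proof (rule has_vector_derivative_transform[OF that F_eq])
      have "continuous_on {0..T} (\<lambda>r. h (F x0 r))"
        by (rule continuous_on_compose2[OF lipschitz_on_continuous_on[OF lip]]) auto
      from has_vector_derivative_add[OF has_vector_derivative_const
          integral_has_vector_derivative[OF this that]]
      show "((\<lambda>s. x0 + integral {0..s} (\<lambda>r. h (F x0 r))) has_vector_derivative h (F x0 t))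
          (at t within {0..T})"
        by simp
    qed
    show "2-lipschitz_on UNIV (\<lambda>x0. F x0 t)" for t
    proof (rule lipschitz_onI)
      fix x0 z0
      have "dist (F x0) (F z0) \<le> norm (x0 - z0) + 1/2 * dist (F x0) (F z0)"
        using contraction[of x0 "F x0" z0 "F z0"] F by simp
      then show "dist (F x0 t) (F z0 t) \<le> 2 * dist x0 z0"
        using dist_bounded[of "F x0" t "F z0"] by (simp add: dist_norm)
    qed simp
  qed
qed

lemma vector_differentiable_bound_interval:
  fixes z :: "real \<Rightarrow> 'a::real_normed_vector"
  assumes "0 \<le> s"
    and "\<And>r. r \<in> {0..s} \<Longrightarrow> (z has_vector_derivative z' r) (at r within {0..s})"
    and "\<And>r. r \<in> {0..s} \<Longrightarrow> norm (z' r) \<le> B"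
  shows "norm (z s - z 0) \<le> B * s"
proof -
  have "norm (z s - z 0) \<le> B * norm (s - 0)"
  proof (rule differentiable_bound[where f'="\<lambda>r h. h *\<^sub>R z' r"])
    fix r
    assume "r \<in> {0..s}"
    then show "(z has_derivative (\<lambda>h. h *\<^sub>R z' r)) (at r within {0..s})"
      using assms(2) by (simp add: has_vector_derivative_def)
    show "onorm (\<lambda>h. h *\<^sub>R z' r) \<le> B"
      using assms(3)[OF \<open>r \<in> {0..s}\<close>] onorm_scaleR_left[OF bounded_linear_ident, of "z' r"]
      by (simp add: onorm_id)
  qed (use assms(1) in auto)
  then show ?thesis
    using assms(1) by simp
qed

definition flow_on :: "('a::real_normed_vector \<Rightarrow> 'a) \<Rightarrow> 'a set \<Rightarrow> real \<Rightarrow> ('a \<Rightarrow> real \<Rightarrow> 'a) \<Rightarrow> bool"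
  where "flow_on f X T Y \<longleftrightarrow> (\<forall>x0\<in>X. Y x0 0 = x0 \<and>
     (\<forall>t\<in>{0..T}. (Y x0 has_vector_derivative f (Y x0 t)) (at t within {0..T})))"

lemma flow_on_derivative:
  assumes "flow_on f X T Y" "x0 \<in> X" "s \<le> T" "r \<in> {0..s}"
  shows "(Y x0 has_vector_derivative f (Y x0 r)) (at r within {0..s})"
  using assms unfolding flow_on_def
  by (auto intro: has_vector_derivative_within_subset[of _ _ _ "{0..T}"])

lemma flow_on_initial: "flow_on f X T Y \<Longrightarrow> x0 \<in> X \<Longrightarrow> Y x0 0 = x0"
  unfolding flow_on_def by blast

(* Solutions of the field extended by the closest-point projection that start within 3/4 of x stay
  in the unit ball up to time T, where the extension agrees with f. *)
lemma local_flow_exists: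
  fixes f :: "'a::euclidean_space \<Rightarrow> 'a"
  assumes lip: "L-lipschitz_on (cball x 1) f" and bnd: "\<And>y. y \<in> cball x 1 \<Longrightarrow> norm (f y) \<le> M"
    and T: "0 < T" "L * T \<le> 1/2" "M * T \<le> 1/4"
  obtains Y where "flow_on f (cball x (3/4)) T Y"
    and "\<forall>x0\<in>cball x (3/4). \<forall>t\<in>{0..T}. norm (Y x0 t - x0) \<le> M * t"
    and "\<And>t. 2-lipschitz_on UNIV (\<lambda>x0. Y x0 t)"
proof -
  define K where "K = cball x (1::real)"
  have K: "convex K" "closed K" "K \<noteq> {}"
    unfolding K_def by auto
  have "1-lipschitz_on UNIV (closest_point K)"
    using closest_point_lipschitz[OF K] by (intro lipschitz_onI) auto
  moreover have "L-lipschitz_on (range (closest_point K)) f"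
    using lipschitz_on_mono[OF lip] closest_point_in_set[OF K(2,3)] unfolding K_def by blast
  ultimately have lip_ext: "L-lipschitz_on UNIV (\<lambda>y. f (closest_point K y))"
    using lipschitz_on_compose2 by (metis mult.right_neutral)
  obtain Y where Y0: "\<And>x0. Y x0 0 = x0"
    and Y': "\<And>x0 t. t \<in> {0..T} \<Longrightarrow>
        (Y x0 has_vector_derivative f (closest_point K (Y x0 t))) (at t within {0..T})"
    and Y_lip: "\<And>t. 2-lipschitz_on UNIV (\<lambda>x0. Y x0 t)"
    using picard_flow_exists[OF lip_ext T(1,2)] by blast
  have disp: "norm (Y x0 t - x0) \<le> M * t" if "t \<in> {0..T}" for x0 t
    using vector_differentiable_bound_interval[of t "Y x0" "\<lambda>r. f (closest_point K (Y x0 r))" M]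
      that Y0
      Y'[THEN has_vector_derivative_within_subset[of _ _ _ "{0..T}" "{0..t}"]]
      bnd closest_point_in_set[OF K(2,3)]
    unfolding K_def by (simp add: mult.commute)
  have in_K: "Y x0 t \<in> K" if "x0 \<in> cball x (3/4)" "t \<in> {0..T}" for x0 t
  proof -
    have "0 \<le> M"
      using order_trans[OF norm_ge_zero bnd[of x]] by simp
    then have "M * t \<le> 1/4"
      using T(3) that(2) mult_left_mono[of t T M] by simp
    then show ?thesis
      using disp[OF that(2), of x0] that(1) norm_triangle_ineq[of "Y x0 t - x0" "x0 - x"]
      unfolding K_def by (simp add: dist_norm norm_minus_commute)
  qed
  have flow: "flow_on f (cball x (3/4)) T Y"
    unfolding flow_on_def
  proof (intro ballI conjI)
    fix x0 t
    assume "x0 \<in> cball x (3/4)" "t \<in> {0..T}"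
    then show "(Y x0 has_vector_derivative f (Y x0 t)) (at t within {0..T})"
      using Y'[of t x0] closest_point_self[OF in_K] by simp
  qed (rule Y0)
  show ?thesis
    using disp by (intro that[OF flow _ Y_lip]) blast
qed

section \<open>Second-order expansion of two-switch trajectories\<close>

lemma flow_drift_bound:
  fixes y :: "real \<Rightarrow> 'a::real_normed_vector"
  assumes "0 \<le> s" and der: "\<And>r. r \<in> {0..s} \<Longrightarrow> (y has_vector_derivative h (y r)) (at r within {0..s})"
    and lip: "L-lipschitz_on K h" and "x \<in> K"
    and in_K: "\<And>r. r \<in> {0..s} \<Longrightarrow> y r \<in> K" and near: "\<And>r. r \<in> {0..s} \<Longrightarrow> norm (y r - x) \<le> \<rho>"
  shows "norm (y s - y 0 - s *\<^sub>R h x) \<le> L * \<rho> * s"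
proof -
  have "norm ((y s - s *\<^sub>R h x) - (y 0 - 0 *\<^sub>R h x)) \<le> L * \<rho> * s"
  proof (rule vector_differentiable_bound_interval[OF \<open>0 \<le> s\<close>])
    fix r
    assume r: "r \<in> {0..s}"
    show "((\<lambda>r. y r - r *\<^sub>R h x) has_vector_derivative h (y r) - h x) (at r within {0..s})"
      using der[OF r] by (auto intro!: derivative_eq_intros)
    have "norm (h (y r) - h x) \<le> L * norm (y r - x)"
      using lipschitz_on_normD[OF lip in_K[OF r] \<open>x \<in> K\<close>] .
    also have "\<dots> \<le> L * \<rho>"
      using near[OF r] lipschitz_on_nonneg[OF lip] by (rule mult_left_mono)
    finally show "norm (h (y r) - h x) \<le> L * \<rho>" .
  qed
  then show ?thesis
    by (simp add: algebra_simps)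
qed

lemma flow_linearization_bound:
  fixes y :: "real \<Rightarrow> 'a::real_normed_vector"
  assumes "0 \<le> s" and der: "\<And>r. r \<in> {0..s} \<Longrightarrow> (y has_vector_derivative h (y r)) (at r within {0..s})"
    and D: "bounded_linear D"
    and lin: "\<And>r. r \<in> {0..s} \<Longrightarrow> norm (h (y r) - h x - D (y r - x)) \<le> E"
    and drift: "\<And>r. r \<in> {0..s} \<Longrightarrow> norm (y r - y 0 - r *\<^sub>R h x) \<le> C"
  shows "norm (y s - y 0 - s *\<^sub>R h x - s *\<^sub>R D (y 0 - x) - (s\<^sup>2 / 2) *\<^sub>R D (h x))
    \<le> (E + onorm D * C) * s"
proof -
  interpret D: bounded_linear D by fact
  define z where "z r = y r - r *\<^sub>R h x - r *\<^sub>R D (y 0 - x) - (r\<^sup>2 / 2) *\<^sub>R D (h x)" for r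
  have "norm (z s - z 0) \<le> (E + onorm D * C) * s"
  proof (rule vector_differentiable_bound_interval[OF \<open>0 \<le> s\<close>])
    fix r
    assume r: "r \<in> {0..s}"
    show "(z has_vector_derivative h (y r) - h x - D (y 0 - x) - r *\<^sub>R D (h x))
        (at r within {0..s})"
      unfolding z_def using der[OF r] by (auto intro!: derivative_eq_intros)
    have "h (y r) - h x - D (y 0 - x) - r *\<^sub>R D (h x) =
        (h (y r) - h x - D (y r - x)) + D (y r - y 0 - r *\<^sub>R h x)"
      by (simp add: D.diff D.add D.scale algebra_simps)
    also have "norm \<dots> \<le> E + onorm D * C"
      using norm_triangle_le[OF add_mono[OF lin[OF r]
            order_trans[OF onorm[OF D] mult_left_mono[OF drift[OF r] onorm_pos_le[OF D]]]]] .
    finally show "norm (h (y r) - h x - D (y 0 - x) - r *\<^sub>R D (h x)) \<le> E + onorm D * C" .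
  qed
  then show ?thesis
    by (simp add: z_def algebra_simps)
qed

lemma flow_second_order_bound:
  fixes f :: "'a::real_normed_vector \<Rightarrow> 'a"
  assumes lip: "L-lipschitz_on (cball x 1) f" and D: "bounded_linear D"
    and flow: "flow_on f (cball x (3/4)) T Y"
    and disp: "\<forall>x0\<in>cball x (3/4). \<forall>t\<in>{0..T}. norm (Y x0 t - x0) \<le> M * t"
    and M: "0 \<le> M" "M * T \<le> 1/4" and s: "s \<in> {0..T}" and x0: "norm (x0 - x) \<le> M * s"
    and lin: "\<And>y. norm (y - x) \<le> 2 * M * s \<Longrightarrow> norm (f y - f x - D (y - x)) \<le> \<epsilon> * norm (y - x)"
    and "0 \<le> \<epsilon>"
  shows "norm (Y x0 s - x0 - s *\<^sub>R f x - s *\<^sub>R D (x0 - x) - (s\<^sup>2 / 2) *\<^sub>R D (f x))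
    \<le> 2 * M * (\<epsilon> + onorm D * L * s) * s\<^sup>2"
proof -
  have Ms: "M * s \<le> 1/4"
    using s M mult_left_mono[of s T M] by simp
  then have x0_in: "x0 \<in> cball x (3/4)"
    using x0 by (simp add: dist_norm norm_minus_commute)
  have near: "norm (Y x0 r - x) \<le> 2 * M * s" if "r \<in> {0..s}" for r
  proof -
    have "norm (Y x0 r - x0) \<le> M * s"
      using disp[rule_format, OF x0_in, of r] that s M(1) mult_left_mono[of r s M] by simp
    then show ?thesis
      using x0 norm_triangle_ineq[of "Y x0 r - x0" "x0 - x"] by simp
  qed
  have in_K: "Y x0 r \<in> cball x 1" if "r \<in> {0..s}" for r
    using near[OF that] Ms by (simp add: dist_norm norm_minus_commute)
  have der: "(Y x0 has_vector_derivative f (Y x0 r')) (at r' within {0..r})"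
    if "r \<in> {0..s}" "r' \<in> {0..r}" for r r'
    using flow_on_derivative[OF flow x0_in _ that(2)] that s by simp
  have "norm (Y x0 s - Y x0 0 - s *\<^sub>R f x - s *\<^sub>R D (Y x0 0 - x) - (s\<^sup>2 / 2) *\<^sub>R D (f x))
      \<le> (\<epsilon> * (2 * M * s) + onorm D * (L * (2 * M * s) * s)) * s"
  proof (rule flow_linearization_bound[OF _ der D])
    fix r
    assume r: "r \<in> {0..s}"
    show "norm (f (Y x0 r) - f x - D (Y x0 r - x)) \<le> \<epsilon> * (2 * M * s)"
      using lin[OF near[OF r]] near[OF r] \<open>0 \<le> \<epsilon>\<close> by (meson mult_left_mono order_trans)
    have "norm (Y x0 r - Y x0 0 - r *\<^sub>R f x) \<le> L * (2 * M * s) * r"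
      using r in_K near lipschitz_on_nonneg[OF lip]
      by (intro flow_drift_bound[OF _ der[OF r] lip]) auto
    also have "\<dots> \<le> L * (2 * M * s) * s"
      using r M(1) lipschitz_on_nonneg[OF lip] by (intro mult_left_mono) auto
    finally show "norm (Y x0 r - Y x0 0 - r *\<^sub>R f x) \<le> L * (2 * M * s) * s" .
  qed (use s in auto)
  then show ?thesis
    using flow_on_initial[OF flow x0_in] by (simp add: power2_eq_square algebra_simps)
qed

lemma flow_second_order_expansion:
  fixes f :: "'a::real_normed_vector \<Rightarrow> 'a"
  assumes lip: "L-lipschitz_on (cball x 1) f" and D: "(f has_derivative D) (at x)"
    and flow: "flow_on f (cball x (3/4)) T Y"
    and disp: "\<forall>x0\<in>cball x (3/4). \<forall>t\<in>{0..T}. norm (Y x0 t - x0) \<le> M * t"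
    and M: "0 \<le> M" "M * T \<le> 1/4" and "0 < T" and "0 < \<eta>"
  shows "\<forall>\<^sub>F s in at_right 0. \<forall>x0. norm (x0 - x) \<le> M * s \<longrightarrow>
    norm (Y x0 s - x0 - s *\<^sub>R f x - s *\<^sub>R D (x0 - x) - (s\<^sup>2 / 2) *\<^sub>R D (f x)) \<le> \<eta> * s\<^sup>2"
proof -
  define \<epsilon> where "\<epsilon> = \<eta> / (4 * (M + 1))"
  have "0 < \<epsilon>"
    using \<open>0 < \<eta>\<close> M(1) by (simp add: \<epsilon>_def)
  then obtain \<delta> where "0 < \<delta>"
    and \<delta>: "\<And>y. norm (y - x) < \<delta> \<Longrightarrow> norm (f y - f x - D (y - x)) \<le> \<epsilon> * norm (y - x)"
    using D unfolding has_derivative_at_alt by blast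
  define P where "P = onorm D * L * M"
  have "0 \<le> P"
    using onorm_pos_le[OF has_derivative_bounded_linear[OF D]] lipschitz_on_nonneg[OF lip] M(1)
    by (simp add: P_def)
  define c where "c = min T (min (\<delta> / (2 * (M + 1))) (\<eta> / (4 * (P + 1))))"
  have "0 < c"
    using \<open>0 < T\<close> \<open>0 < \<delta>\<close> \<open>0 < \<eta>\<close> M(1) \<open>0 \<le> P\<close> by (simp add: c_def)
  show ?thesis
    using eventually_at_right_real[OF \<open>0 < c\<close>]
  proof eventually_elim
    case (elim s)
    then have s: "s \<in> {0..T}" "2 * (M + 1) * s < \<delta>" "4 * (P + 1) * s \<le> \<eta>"
      using M(1) \<open>0 \<le> P\<close> by (auto simp: c_def field_simps)
    have lin: "norm (f y - f x - D (y - x)) \<le> \<epsilon> * norm (y - x)" if "norm (y - x) \<le> 2 * M * s" for y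
      using that s(1,2) by (intro \<delta>) (simp add: algebra_simps)
    have "2 * M * \<epsilon> \<le> \<eta> / 2"
      using \<open>0 < \<eta>\<close> M(1) by (simp add: \<epsilon>_def field_simps)
    moreover have "2 * P * s \<le> \<eta> / 2"
      using s(3) mult_right_mono[of P "P + 1" s] s(1) by (simp add: algebra_simps)
    ultimately have "2 * M * (\<epsilon> + onorm D * L * s) * s\<^sup>2 \<le> \<eta> * s\<^sup>2"
      by (intro mult_right_mono) (auto simp: P_def algebra_simps)
    then show ?case
      using flow_second_order_bound[OF lip has_derivative_bounded_linear[OF D] flow disp M s(1)
          _ lin]
        \<open>0 < \<epsilon>\<close> by (meson less_imp_le order_trans)
  qed
qed

lemma two_switch_endpoint_expansion:
  fixes f g :: "'a::real_normed_vector \<Rightarrow> 'a"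
  assumes lip: "L-lipschitz_on (cball x 1) f" "L-lipschitz_on (cball x 1) g"
    and Df: "(f has_derivative Df) (at x)" and Dg: "(g has_derivative Dg) (at x)"
    and flows: "flow_on f (cball x (3/4)) T Yf" "flow_on g (cball x (3/4)) T Yg"
    and disp: "\<forall>x0\<in>cball x (3/4). \<forall>t\<in>{0..T}. norm (Yf x0 t - x0) \<le> M * t"
      "\<forall>x0\<in>cball x (3/4). \<forall>t\<in>{0..T}. norm (Yg x0 t - x0) \<le> M * t"
    and M: "0 \<le> M" "M * T \<le> 1/4" and "0 < T" and "0 < \<eta>"
  shows "\<forall>\<^sub>F s in at_right 0. norm (Yg (Yf x s) s - x - s *\<^sub>R (f x + g x)
    - s\<^sup>2 *\<^sub>R ((1/2) *\<^sub>R Df (f x) + Dg (f x) + (1/2) *\<^sub>R Dg (g x))) \<le> \<eta> * s\<^sup>2"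
proof -
  interpret Df: bounded_linear Df
    using Df by (rule has_derivative_bounded_linear)
  interpret Dg: bounded_linear Dg
    using Dg by (rule has_derivative_bounded_linear)
  define \<eta>' where "\<eta>' = \<eta> / 3"
  have "0 < \<eta>'"
    using \<open>0 < \<eta>\<close> by (simp add: \<eta>'_def)
  define B where "B = onorm Dg * (\<eta>' + norm (Df (f x)))"
  have "0 \<le> B"
    using onorm_pos_le[OF Dg.bounded_linear] \<open>0 < \<eta>'\<close> by (simp add: B_def)
  define c where "c = min T (\<eta>' / (B + 1))"
  have "0 < c"
    using \<open>0 < T\<close> \<open>0 < \<eta>'\<close> \<open>0 \<le> B\<close> by (simp add: c_def)
  show ?thesis
    using flow_second_order_expansion[OF lip(1) Df flows(1) disp(1) M \<open>0 < T\<close> \<open>0 < \<eta>'\<close>]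
      flow_second_order_expansion[OF lip(2) Dg flows(2) disp(2) M \<open>0 < T\<close> \<open>0 < \<eta>'\<close>]
      eventually_at_right_real[OF \<open>0 < c\<close>]
  proof eventually_elim
    case (elim s)
    then have s: "s \<in> {0..T}" "B * s \<le> \<eta>'"
      using \<open>0 \<le> B\<close> by (auto simp: c_def field_simps)
    define p where "p = Yf x s"
    have p: "norm (p - x) \<le> M * s"
      using disp(1)[rule_format, OF _ s(1), of x] by (simp add: p_def)
    define e1 where "e1 = p - x - s *\<^sub>R f x - (s\<^sup>2 / 2) *\<^sub>R Df (f x)"
    define e2 where "e2 = Yg p s - p - s *\<^sub>R g x - s *\<^sub>R Dg (p - x) - (s\<^sup>2 / 2) *\<^sub>R Dg (g x)"
    have e1: "norm e1 \<le> \<eta>' * s\<^sup>2"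
      using elim(1)[rule_format, of x] M(1) s(1) by (simp add: e1_def p_def)
    have e2: "norm e2 \<le> \<eta>' * s\<^sup>2"
      using elim(2) p unfolding e2_def by blast
    have "p - x - s *\<^sub>R f x = e1 + (s\<^sup>2 / 2) *\<^sub>R Df (f x)"
      by (simp add: e1_def)
    then have "norm (p - x - s *\<^sub>R f x) \<le> \<eta>' * s\<^sup>2 + s\<^sup>2 / 2 * norm (Df (f x))"
      using norm_triangle_ineq[of e1 "(s\<^sup>2 / 2) *\<^sub>R Df (f x)"] e1 by simp
    also have "\<dots> \<le> s\<^sup>2 * (\<eta>' + norm (Df (f x)))"
      by (simp add: algebra_simps)
    finally have "norm (Dg (p - x - s *\<^sub>R f x)) \<le> onorm Dg * (s\<^sup>2 * (\<eta>' + norm (Df (f x))))"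
      using onorm[OF Dg.bounded_linear] onorm_pos_le[OF Dg.bounded_linear]
        by (meson mult_left_mono order_trans)
    then have "norm (s *\<^sub>R Dg (p - x - s *\<^sub>R f x))
        \<le> s * (onorm Dg * (s\<^sup>2 * (\<eta>' + norm (Df (f x)))))"
      using s(1) by (simp add: mult_left_mono)
    also have "\<dots> = (B * s) * s\<^sup>2"
      by (simp add: B_def power2_eq_square)
    also have "\<dots> \<le> \<eta>' * s\<^sup>2"
      using s(2) by (simp add: mult_right_mono)
    finally have e3: "norm (s *\<^sub>R Dg (p - x - s *\<^sub>R f x)) \<le> \<eta>' * s\<^sup>2" .
    have "Yg p s - x - s *\<^sub>R (f x + g x)
        - s\<^sup>2 *\<^sub>R ((1/2) *\<^sub>R Df (f x) + Dg (f x) + (1/2) *\<^sub>R Dg (g x))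
        = e1 + e2 + s *\<^sub>R Dg (p - x - s *\<^sub>R f x)"
      by (simp add: e1_def e2_def Dg.diff Dg.add Dg.scale algebra_simps power2_eq_square)
    also have "norm \<dots> \<le> \<eta> * s\<^sup>2"
      using norm_triangle_le[OF add_mono[OF norm_triangle_le[OF add_mono[OF e1 e2]] e3]]
      by (simp add: \<eta>'_def)
    finally show ?case
      by (simp add: p_def)
  qed
qed

section \<open>Second-order descent along a curve\<close>

lemma quadratic_form_perturbation:
  fixes H :: "'a::real_inner \<Rightarrow> 'a"
  assumes "bounded_linear H"
  shows "\<bar>H (a + b) \<bullet> (a + b) - H a \<bullet> a\<bar> \<le> onorm H * norm b * (2 * norm a + norm b)"
proof -
  interpret H: bounded_linear H by fact
  have bound: "\<bar>H v \<bullet> w\<bar> \<le> onorm H * norm v * norm w" for v w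
    using Cauchy_Schwarz_ineq2[of "H v" w] onorm[OF assms, of v]
    by (meson mult_right_mono norm_ge_zero order_trans)
  have "H (a + b) \<bullet> (a + b) - H a \<bullet> a = H a \<bullet> b + H b \<bullet> a + H b \<bullet> b"
    by (simp add: H.add inner_add_left inner_add_right)
  also have "\<bar>\<dots>\<bar> \<le> onorm H * norm a * norm b + onorm H * norm b * norm a
      + onorm H * norm b * norm b"
    using bound[of a b] bound[of b a] bound[of b b] by linarith
  finally show ?thesis
    by (simp add: algebra_simps)
qed

lemma second_order_taylor:
  fixes u :: "real^'n \<Rightarrow> real"
  assumes u: "\<And>y. u differentiable (at y)" and du: "\<And>j. partial j u differentiable (at x)"
    and "0 < \<epsilon>"
  shows "\<exists>\<delta>>0. \<forall>d. norm d < \<delta> \<longrightarrow>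
      \<bar>u (x + d) - u x - grad u x \<bullet> d - (hess u x *v d) \<bullet> d / 2\<bar> \<le> \<epsilon> * (norm d)\<^sup>2"
proof -
  define J where "J = jac (grad u) x"
  have "(grad u has_derivative (\<lambda>h. J *v h)) (at x)"
    unfolding J_def by (rule jac_has_derivative) (simp add: grad_def du)
  then obtain \<delta> where "0 < \<delta>"
    and \<delta>: "\<And>y. norm (y - x) < \<delta> \<Longrightarrow> norm (grad u y - grad u x - J *v (y - x)) \<le> \<epsilon> * norm (y - x)"
    using \<open>0 < \<epsilon>\<close> unfolding has_derivative_at_alt by blast
  have JH: "(J *v d) \<bullet> d = (hess u x *v d) \<bullet> d" for d
    by (simp add: J_def jac_grad dot_lmul_matrix[symmetric] inner_commute)
  show ?thesis
  proof (intro exI[of _ \<delta>] conjI allI impI)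
    fix d :: "real^'n"
    assume d: "norm d < \<delta>"
    define \<psi> where "\<psi> \<tau> = u (x + \<tau> *\<^sub>R d) - \<tau> * (grad u x \<bullet> d) - (\<tau>\<^sup>2 / 2) * ((J *v d) \<bullet> d)" for \<tau>
    have "norm (\<psi> 1 - \<psi> 0) \<le> \<epsilon> * (norm d)\<^sup>2 * 1"
    proof (rule vector_differentiable_bound_interval)
      fix \<tau> :: real
      assume \<tau>: "\<tau> \<in> {0..1}"
      have "((\<lambda>\<tau>. x + \<tau> *\<^sub>R d) has_derivative (\<lambda>t. t *\<^sub>R d)) (at \<tau> within {0..1})"
        by (intro derivative_eq_intros) auto
      from has_derivative_compose[OF this grad_has_derivative[OF u]]
      have "((\<lambda>\<tau>. u (x + \<tau> *\<^sub>R d)) has_real_derivative grad u (x + \<tau> *\<^sub>R d) \<bullet> d)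
          (at \<tau> within {0..1})"
        by (simp add: has_field_derivative_def mult_commute_abs)
      then show "(\<psi> has_vector_derivative (grad u (x + \<tau> *\<^sub>R d) - grad u x - J *v (\<tau> *\<^sub>R d)) \<bullet> d)
          (at \<tau> within {0..1})"
        unfolding \<psi>_def has_real_derivative_iff_has_vector_derivative[symmetric]
        by (auto intro!: derivative_eq_intros simp: inner_diff_left matrix_vector_mult_scaleR)
      have "norm (\<tau> *\<^sub>R d) \<le> norm d"
        using \<tau> by (simp add: mult_left_le_one_le)
      then have "norm (grad u (x + \<tau> *\<^sub>R d) - grad u x - J *v (\<tau> *\<^sub>R d)) \<le> \<epsilon> * norm d"
        using \<delta>[of "x + \<tau> *\<^sub>R d"] d \<open>0 < \<epsilon>\<close> by (simp add: order_trans[OF _ mult_left_mono])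
      then show "norm ((grad u (x + \<tau> *\<^sub>R d) - grad u x - J *v (\<tau> *\<^sub>R d)) \<bullet> d) \<le> \<epsilon> * (norm d)\<^sup>2"
        using order_trans[OF Cauchy_Schwarz_ineq2 mult_right_mono[OF _ norm_ge_zero]]
        by (metis mult.assoc power2_eq_square real_norm_def)
    qed simp
    then show "\<bar>u (x + d) - u x - grad u x \<bullet> d - (hess u x *v d) \<bullet> d / 2\<bar> \<le> \<epsilon> * (norm d)\<^sup>2"
      by (simp add: \<psi>_def JH)
  qed (rule \<open>0 < \<delta>\<close>)
qed

lemma quadratic_model_along_curve:
  fixes g v w e :: "'a::real_inner"
  assumes H: "bounded_linear H" and "g \<bullet> v = 0" and s: "0 \<le> s" "s \<le> 1"
    and e: "norm e \<le> s\<^sup>2"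
  defines "d \<equiv> s *\<^sub>R v + s\<^sup>2 *\<^sub>R w + e" and "V \<equiv> norm v + norm w + 1"
  shows "norm d \<le> s * V"
    and "g \<bullet> d + H d \<bullet> d / 2
      \<le> s\<^sup>2 * (g \<bullet> w + H v \<bullet> v / 2) + norm g * norm e + 3/2 * onorm H * V\<^sup>2 * s ^ 3"
proof -
  interpret H: bounded_linear H by fact
  define z where "z = s\<^sup>2 *\<^sub>R w + e"
  have d: "d = s *\<^sub>R v + z"
    by (simp add: d_def z_def)
  have s2: "s\<^sup>2 \<le> s"
    using s by (simp add: power2_eq_square mult_left_le_one_le)
  have "0 \<le> V"
    by (simp add: V_def add_nonneg_pos)
  have "norm z \<le> s\<^sup>2 * (norm w + 1)"
    using norm_triangle_ineq[of "s\<^sup>2 *\<^sub>R w" e] e by (simp add: z_def algebra_simps)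
  moreover have "s\<^sup>2 * (norm w + 1) \<le> s * (norm w + 1)"
    using s2 by (simp add: mult_right_mono)
  ultimately have z': "norm z \<le> s * (norm w + 1)"
    by linarith
  have z: "norm z \<le> s\<^sup>2 * V"
    using \<open>norm z \<le> s\<^sup>2 * (norm w + 1)\<close> mult_left_mono[of "norm w + 1" V "s\<^sup>2"]
    by (simp add: V_def)
  have sv: "norm (s *\<^sub>R v) \<le> s * V"
    using s(1) by (simp add: V_def mult_left_mono)
  show "norm d \<le> s * V"
    using norm_triangle_ineq[of "s *\<^sub>R v" z] z' s(1) unfolding d V_def by (simp add: algebra_simps)
  have "g \<bullet> d = s\<^sup>2 * (g \<bullet> w) + g \<bullet> e"
    using \<open>g \<bullet> v = 0\<close> by (simp add: d_def inner_add_right)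
  also have "\<dots> \<le> s\<^sup>2 * (g \<bullet> w) + norm g * norm e"
    using Cauchy_Schwarz_ineq2[of g e] by simp
  finally have gd: "g \<bullet> d \<le> s\<^sup>2 * (g \<bullet> w) + norm g * norm e" .
  have "\<bar>H d \<bullet> d - H (s *\<^sub>R v) \<bullet> (s *\<^sub>R v)\<bar> \<le> onorm H * norm z * (2 * norm (s *\<^sub>R v) + norm z)"
    unfolding d by (rule quadratic_form_perturbation[OF H])
  also have "\<dots> \<le> onorm H * (s\<^sup>2 * V) * (3 * (s * V))"
  proof (rule mult_mono)
    show "onorm H * norm z \<le> onorm H * (s\<^sup>2 * V)"
      using z onorm_pos_le[OF H] by (rule mult_left_mono)
    show "2 * norm (s *\<^sub>R v) + norm z \<le> 3 * (s * V)"
      using sv z mult_right_mono[OF s2 \<open>0 \<le> V\<close>] by linarith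
  qed (use onorm_pos_le[OF H] \<open>0 \<le> V\<close> in auto)
  finally have "H d \<bullet> d \<le> s\<^sup>2 * (H v \<bullet> v) + 3 * onorm H * V\<^sup>2 * s ^ 3"
    by (simp add: H.scale power2_eq_square power3_eq_cube algebra_simps)
  with gd show "g \<bullet> d + H d \<bullet> d / 2
      \<le> s\<^sup>2 * (g \<bullet> w + H v \<bullet> v / 2) + norm g * norm e + 3/2 * onorm H * V\<^sup>2 * s ^ 3"
    by (simp add: algebra_simps)
qed

lemma second_order_descent:
  fixes u :: "'a::real_inner \<Rightarrow> real" and c :: "real \<Rightarrow> 'a"
  assumes taylor: "\<And>\<epsilon>. 0 < \<epsilon> \<Longrightarrow> \<exists>\<delta>>0. \<forall>d. norm d < \<delta> \<longrightarrow>
      \<bar>u (x + d) - u x - g \<bullet> d - H d \<bullet> d / 2\<bar> \<le> \<epsilon> * (norm d)\<^sup>2"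
    and H: "bounded_linear H" and "g \<bullet> v = 0"
    and curve: "\<And>\<eta>. 0 < \<eta> \<Longrightarrow> \<forall>\<^sub>F s in at_right 0. norm (c s - x - s *\<^sub>R v - s\<^sup>2 *\<^sub>R w) \<le> \<eta> * s\<^sup>2"
    and neg: "g \<bullet> w + H v \<bullet> v / 2 < 0"
  shows "\<forall>\<^sub>F s in at_right 0. u (c s) < u x"
proof -
  define \<kappa> where "\<kappa> = - (g \<bullet> w + H v \<bullet> v / 2)"
  define V where "V = norm v + norm w + 1"
  have "0 < \<kappa>" "1 \<le> V"
    using neg by (simp_all add: \<kappa>_def V_def)
  define \<eta> where "\<eta> = min 1 (\<kappa> / (4 * (norm g + 1)))"
  have "0 < \<eta>"
    using \<open>0 < \<kappa>\<close> by (simp add: \<eta>_def add_nonneg_pos)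
  obtain \<delta> where "0 < \<delta>" and \<delta>: "\<And>d. norm d < \<delta> \<Longrightarrow>
      \<bar>u (x + d) - u x - g \<bullet> d - H d \<bullet> d / 2\<bar> \<le> \<kappa> / (4 * V\<^sup>2) * (norm d)\<^sup>2"
    using taylor[of "\<kappa> / (4 * V\<^sup>2)"] \<open>0 < \<kappa>\<close> \<open>1 \<le> V\<close> by auto
  define s0 where "s0 = min 1 (min (\<delta> / V) (\<kappa> / (6 * (onorm H + 1) * V\<^sup>2)))"
  have "0 < s0"
    using \<open>0 < \<delta>\<close> \<open>0 < \<kappa>\<close> \<open>1 \<le> V\<close> onorm_pos_le[OF H] by (simp add: s0_def add_nonneg_pos)
  show ?thesis
    using curve[OF \<open>0 < \<eta>\<close>] eventually_at_right_real[OF \<open>0 < s0\<close>]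
  proof eventually_elim
    case (elim s)
    then have s: "0 < s" "s \<le> 1" "s < \<delta> / V" "s < \<kappa> / (6 * (onorm H + 1) * V\<^sup>2)"
      by (auto simp: s0_def)
    have sV: "s * V < \<delta>"
      using s(3) \<open>1 \<le> V\<close> by (simp add: pos_less_divide_eq)
    have sH: "6 * (onorm H + 1) * V\<^sup>2 * s \<le> \<kappa>"
      using s(4) \<open>1 \<le> V\<close> onorm_pos_le[OF H]
        by (simp add: pos_less_divide_eq add_nonneg_pos mult.commute)
    define e where "e = c s - x - s *\<^sub>R v - s\<^sup>2 *\<^sub>R w"
    have e: "norm e \<le> \<eta> * s\<^sup>2"
      using elim(1) by (simp add: e_def)
    then have "norm e \<le> s\<^sup>2"
      using mult_right_mono[of \<eta> 1 "s\<^sup>2"] by (simp add: \<eta>_def)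
    note model = quadratic_model_along_curve[where w=w, OF H \<open>g \<bullet> v = 0\<close>
        less_imp_le[OF s(1)] s(2) this,
        folded V_def]
    have d: "s *\<^sub>R v + s\<^sup>2 *\<^sub>R w + e = c s - x"
      by (simp add: e_def)
    have "(norm (c s - x))\<^sup>2 \<le> (s * V)\<^sup>2"
      using model(1) unfolding d by (intro power_mono) auto
    then have "\<kappa> / (4 * V\<^sup>2) * (norm (c s - x))\<^sup>2 \<le> \<kappa> / 4 * s\<^sup>2"
      using \<open>0 < \<kappa>\<close> \<open>1 \<le> V\<close> by (simp add: field_simps)
    moreover have "norm g * norm e \<le> \<kappa> / 4 * s\<^sup>2"
    proof -
      have "norm g * \<eta> \<le> (norm g + 1) * (\<kappa> / (4 * (norm g + 1)))"
        using \<open>0 < \<eta>\<close> by (intro mult_mono) (auto simp: \<eta>_def)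
      moreover have "norm g + 1 \<noteq> 0"
        by (metis add_nonneg_pos norm_ge_zero zero_less_one less_irrefl)
      then have "(norm g + 1) * (\<kappa> / (4 * (norm g + 1))) = \<kappa> / 4"
        by (simp add: field_simps)
      ultimately have "norm g * \<eta> \<le> \<kappa> / 4"
        by linarith
      then show ?thesis
        using mult_left_mono[OF e norm_ge_zero[of g]] mult_right_mono[of "norm g * \<eta>" "\<kappa> / 4" "s\<^sup>2"]
        by (simp add: mult.assoc)
    qed
    moreover have "3/2 * onorm H * V\<^sup>2 * s ^ 3 \<le> \<kappa> / 4 * s\<^sup>2"
    proof -
      have "6 * onorm H * V\<^sup>2 * s \<le> 6 * (onorm H + 1) * V\<^sup>2 * s"
        using s(1) by (simp add: algebra_simps)
      then have "6 * onorm H * V\<^sup>2 * s \<le> \<kappa>"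
        using sH by linarith
      then show ?thesis
        using mult_right_mono[of "6 * onorm H * V\<^sup>2 * s" \<kappa> "s\<^sup>2"]
        by (simp add: power2_eq_square power3_eq_cube algebra_simps)
    qed
    moreover have "norm (c s - x) < \<delta>"
      using model(1) sV unfolding d by linarith
    then have "u (c s) - u x \<le> g \<bullet> (c s - x) + H (c s - x) \<bullet> (c s - x) / 2
        + \<kappa> / (4 * V\<^sup>2) * (norm (c s - x))\<^sup>2"
      using \<delta>[of "c s - x"] by simp
    moreover have "s\<^sup>2 * (g \<bullet> w + H v \<bullet> v / 2) = - (\<kappa> * s\<^sup>2)"
      by (simp add: \<kappa>_def algebra_simps)
    moreover have "0 < \<kappa> * s\<^sup>2"
      using \<open>0 < \<kappa>\<close> s(1) by simp
    ultimately show "u (c s) < u x"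
      using model(2) unfolding d by linarith
  qed
qed

section \<open>Switching controls and reachable sets\<close>

lemma switching_control_admissible:
  fixes a1 a2 :: "real^'m"
  assumes "norm a1 \<le> 1" "norm a2 \<le> 1"
  shows "admissible (\<lambda>r. if r < s then a1 else a2)"
  unfolding admissible_def piecewise_continuous_def
proof (intro conjI allI impI)
  fix t :: real
  show "norm (if t < s then a1 else a2) \<le> 1"
    using assms by auto
next
  fix T :: real
  define a where "a = (\<lambda>r::real. if r < s then a1 else a2)"
  have "isCont a r" if "r \<noteq> s" for r
  proof -
    have "\<forall>\<^sub>F y in nhds r. a y = a r"
    proof (cases "r < s")
      case True
      have "\<forall>\<^sub>F y in nhds r. y \<in> {..<s}"
        by (rule eventually_nhds_in_open) (use True in auto)
      then show ?thesis
        by (rule eventually_mono) (use True in \<open>simp add: a_def\<close>)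
    next
      case False
      have "\<forall>\<^sub>F y in nhds r. y \<in> {s<..}"
        by (rule eventually_nhds_in_open) (use False that in auto)
      then show ?thesis
        by (rule eventually_mono) (use False in \<open>simp add: a_def\<close>)
    qed
    from isCont_cong[OF this] show ?thesis
      by simp
  qed
  then have "continuous_on ({0..T} - {s} \<inter> {0..T}) a"
    by (intro continuous_at_imp_continuous_on) auto
  moreover have "(a \<longlongrightarrow> a1) (at_left s)"
    by (rule tendsto_eventually, rule eventually_mono[OF eventually_at_left_real[of "s - 1" s]])
      (auto simp: a_def)
  moreover have "(a \<longlongrightarrow> a2) (at_right s)"
    by (rule tendsto_eventually, rule eventually_mono[OF eventually_at_right_real[of s "s + 1"]])
      (auto simp: a_def)
  ultimately show "\<exists>S. finite S \<and> S \<subseteq> {0..T} \<and> continuous_on ({0..T} - S) a \<and>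
      (\<forall>s\<in>S. (0 < s \<longrightarrow> (\<exists>l. (a \<longlongrightarrow> l) (at_left s))) \<and> (\<exists>r. (a \<longlongrightarrow> r) (at_right s)))"
    by (intro exI[of _ "{s} \<inter> {0..T}"]) auto
qed

lemma flow_on_has_integral:
  fixes f :: "'a::banach \<Rightarrow> 'a"
  assumes "flow_on f X T Y" "x0 \<in> X" "t \<in> {0..T}"
  shows "((\<lambda>r. f (Y x0 r)) has_integral (Y x0 t - x0)) {0..t}"
  using fundamental_theorem_of_calculus[OF _ flow_on_derivative[OF assms(1,2)]]
    flow_on_initial[OF assms(1,2)] assms(3)
  by simp

lemma switched_flows_trajectory:
  fixes \<sigma> :: "real^'n \<Rightarrow> real^'m^'n"
  assumes flows: "flow_on (vf \<sigma> a1) X T Y1" "flow_on (vf \<sigma> a2) X T Y2"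
    and X: "x0 \<in> X" "Y1 x0 s \<in> X" and s: "0 < s" "s \<le> T"
  shows "trajectory \<sigma> (\<lambda>r. if r < s then a1 else a2) x0 (2 * s)
    (\<lambda>r. if r \<le> s then Y1 x0 r else Y2 (Y1 x0 s) (r - s))"
proof -
  define a where "a = (\<lambda>r::real. if r < s then a1 else a2)"
  define x where "x = (\<lambda>r. if r \<le> s then Y1 x0 r else Y2 (Y1 x0 s) (r - s))"
  have first: "((\<lambda>r. \<sigma> (x r) *v a r) has_integral (Y1 x0 t - x0)) {0..t}" if "t \<in> {0..s}" for t
  proof (rule has_integral_spike_finite[of "{s}"])
    show "((\<lambda>r. vf \<sigma> a1 (Y1 x0 r)) has_integral (Y1 x0 t - x0)) {0..t}"
      using flow_on_has_integral[OF flows(1) X(1)] that s by simp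
  qed (use that in \<open>auto simp: x_def a_def vf_def\<close>)
  have second: "((\<lambda>r. \<sigma> (x r) *v a r) has_integral (Y2 (Y1 x0 s) (t - s) - Y1 x0 s)) {s..t}"
    if "t \<in> {s..2 * s}" for t
  proof (rule has_integral_spike_finite[of "{s}"])
    have "((\<lambda>r. vf \<sigma> a2 (Y2 (Y1 x0 s) r)) has_integral (Y2 (Y1 x0 s) (t - s) - Y1 x0 s))
        (cbox 0 (t - s))"
      using flow_on_has_integral[OF flows(2) X(2)] that s by simp
    from has_integral_affinity'[OF this, of 1 "-s"]
    show "((\<lambda>r. vf \<sigma> a2 (Y2 (Y1 x0 s) (r - s))) has_integral (Y2 (Y1 x0 s) (t - s) - Y1 x0 s))
        {s..t}"
      by simp
  qed (auto simp: x_def a_def vf_def)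
  show ?thesis
    unfolding trajectory_def a_def[symmetric] x_def[symmetric]
  proof (intro conjI ballI)
    show "x 0 = x0"
      using flow_on_initial[OF flows(1) X(1)] s by (simp add: x_def)
    fix t
    assume t: "t \<in> {0..2 * s}"
    show "((\<lambda>r. \<sigma> (x r) *v a r) has_integral (x t - x0)) {0..t}"
    proof (cases "t \<le> s")
      case True
      then show ?thesis
        using first[of t] t by (simp add: x_def)
    next
      case False
      have "((\<lambda>r. \<sigma> (x r) *v a r) has_integral ((Y1 x0 s - x0) + (Y2 (Y1 x0 s) (t - s) - Y1 x0 s)))
          {0..t}"
        using False s t first[of s] second[of t] by (intro has_integral_combine[of 0 s t]) auto
      then show ?thesis
        using False by (simp add: x_def)
    qed
  qed
qed

lemma switched_flows_reach:
  fixes \<sigma> :: "real^'n \<Rightarrow> real^'m^'n"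
  assumes "flow_on (vf \<sigma> a1) X T Y1" "flow_on (vf \<sigma> a2) X T Y2"
    and "x0 \<in> X" "Y1 x0 s \<in> X" and "0 < s" "s \<le> T" "2 * s < t"
    and "norm a1 \<le> 1" "norm a2 \<le> 1" and "Y2 (Y1 x0 s) s \<in> S"
  shows "x0 \<in> reach_set \<sigma> S t"
  unfolding reach_set_def
  using switching_control_admissible[of a1 a2 s]
      switched_flows_trajectory[of \<sigma> a1 X T Y1 a2 Y2 x0 s] assms
  by (intro CollectI exI[of _ "\<lambda>r. if r < s then a1 else a2"] conjI exI[of _ "2 * s"]
      exI[of _ "\<lambda>r. if r \<le> s then Y1 x0 r else Y2 (Y1 x0 s) (r - s)"]) auto

lemma interior_reach_set_two_switches:
  fixes \<sigma> :: "real^'n \<Rightarrow> real^'m^'n" and u :: "real^'n \<Rightarrow> real"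
  assumes flows: "flow_on (vf \<sigma> a1) (cball x (3/4)) T Y1" "flow_on (vf \<sigma> a2) (cball x (3/4)) T Y2"
    and disp: "\<forall>x0\<in>cball x (3/4). \<forall>t\<in>{0..T}. norm (Y1 x0 t - x0) \<le> M * t"
    and M: "0 \<le> M" "M * T \<le> 1/4"
    and lip: "2-lipschitz_on UNIV (\<lambda>x0. Y1 x0 s)" "2-lipschitz_on UNIV (\<lambda>x0. Y2 x0 s)"
    and a: "norm a1 \<le> 1" "norm a2 \<le> 1" and s: "0 < s" "s \<le> T" "2 * s < t"
    and u: "continuous_on UNIV u" and "u (Y2 (Y1 x s) s) < c"
  shows "x \<in> interior (reach_set \<sigma> {y. u y \<le> c} t)"
proof -
  have "(2 * 2)-lipschitz_on UNIV (\<lambda>x0. Y2 (Y1 x0 s) s)"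
    using lipschitz_on_compose2[OF lip(1) lipschitz_on_mono[OF lip(2) subset_UNIV order_refl]] .
  then have "continuous_on UNIV (\<lambda>x0. u (Y2 (Y1 x0 s) s))"
    by (intro continuous_on_compose2[OF u lipschitz_on_continuous_on]) auto
  then have "isCont (\<lambda>x0. u (Y2 (Y1 x0 s) s)) x"
    by (simp add: continuous_on_eq_continuous_at)
  then have "((\<lambda>x0. u (Y2 (Y1 x0 s) s)) \<longlongrightarrow> u (Y2 (Y1 x s) s)) (nhds x)"
    using tendsto_at_iff_tendsto_nhds[of "\<lambda>x0. u (Y2 (Y1 x0 s) s)" x] by (simp add: isCont_def)
  then have "\<forall>\<^sub>F x0 in nhds x. u (Y2 (Y1 x0 s) s) < c"
    using \<open>u (Y2 (Y1 x s) s) < c\<close> by (rule order_tendstoD)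
  moreover have "\<forall>\<^sub>F x0 in nhds x. x0 \<in> ball x (1/4)"
    by (rule eventually_nhds_in_open) auto
  ultimately have "\<forall>\<^sub>F x0 in nhds x. x0 \<in> reach_set \<sigma> {y. u y \<le> c} t"
  proof eventually_elim
    case (elim x0)
    then have x0: "x0 \<in> cball x (3/4)" "dist x x0 \<le> 1/4"
      by auto
    have "norm (Y1 x0 s - x0) \<le> M * s"
      using disp x0(1) s by simp
    also have "\<dots> \<le> 1/4"
      using s M mult_left_mono[of s T M] by simp
    finally have "norm (Y1 x0 s - x0) \<le> 1/4" .
    then have "Y1 x0 s \<in> cball x (3/4)"
      using x0(2) dist_triangle[of x "Y1 x0 s" x0] by (simp add: dist_norm norm_minus_commute)
    then show ?case
      using switched_flows_reach[OF flows x0(1) _ s a] elim(1) by simp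
  qed
  then show ?thesis
    unfolding eventually_nhds by (meson interiorI subsetI)
qed

lemma vf_local_flows_exist:
  fixes \<sigma> :: "real^'n \<Rightarrow> real^'m^'n"
  assumes "\<forall>i j. Ck 1 (\<lambda>x. \<sigma> x $ i $ j)"
  obtains L M T where "\<And>a. norm a \<le> 1 \<Longrightarrow> L-lipschitz_on (cball x 1) (vf \<sigma> a)"
    and "0 \<le> M" "0 < T" "M * T \<le> 1/4"
    and "\<And>a. norm a \<le> 1 \<Longrightarrow> \<exists>Y. flow_on (vf \<sigma> a) (cball x (3/4)) T Y \<and>
      (\<forall>x0\<in>cball x (3/4). \<forall>t\<in>{0..T}. norm (Y x0 t - x0) \<le> M * t) \<and>
      (\<forall>t. 2-lipschitz_on UNIV (\<lambda>x0. Y x0 t))"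
proof -
  obtain L M where lip: "\<And>a. norm a \<le> 1 \<Longrightarrow> L-lipschitz_on (cball x 1) (vf \<sigma> a)"
    and bnd: "\<And>a y. norm a \<le> 1 \<Longrightarrow> y \<in> cball x 1 \<Longrightarrow> norm (vf \<sigma> a y) \<le> M"
    using vf_uniformly_lipschitz_bounded[OF assms compact_cball convex_cball] by blast
  have "0 \<le> L" "0 \<le> M"
    using lipschitz_on_nonneg[OF lip[of 0]] order_trans[OF norm_ge_zero bnd[of 0 x]] by auto
  define T where "T = 1 / (2 * L + 4 * M + 1)"
  have T: "0 < T" "L * T \<le> 1/2" "M * T \<le> 1/4"
    using \<open>0 \<le> L\<close> \<open>0 \<le> M\<close> by (auto simp: T_def field_simps)
  show ?thesis
  proof (rule that[OF lip \<open>0 \<le> M\<close> T(1,3)])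
    fix a :: "real^'m"
    assume "norm a \<le> 1"
    from local_flow_exists[OF lip[OF this] bnd[OF this] T]
    show "\<exists>Y. flow_on (vf \<sigma> a) (cball x (3/4)) T Y \<and>
      (\<forall>x0\<in>cball x (3/4). \<forall>t\<in>{0..T}. norm (Y x0 t - x0) \<le> M * t) \<and>
      (\<forall>t. 2-lipschitz_on UNIV (\<lambda>x0. Y x0 t))"
      by metis
  qed
qed

lemma STLA_if_two_switch_descent:
  fixes \<sigma> :: "real^'n \<Rightarrow> real^'m^'n" and u :: "real^'n \<Rightarrow> real"
  assumes flows: "flow_on (vf \<sigma> a1) (cball x (3/4)) T Y1" "flow_on (vf \<sigma> a2) (cball x (3/4)) T Y2"
    and disp: "\<forall>x0\<in>cball x (3/4). \<forall>t\<in>{0..T}. norm (Y1 x0 t - x0) \<le> M * t"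
    and M: "0 \<le> M" "M * T \<le> 1/4" and "0 < T"
    and lip: "\<And>t. 2-lipschitz_on UNIV (\<lambda>x0. Y1 x0 t)" "\<And>t. 2-lipschitz_on UNIV (\<lambda>x0. Y2 x0 t)"
    and a: "norm a1 \<le> 1" "norm a2 \<le> 1" and u: "continuous_on UNIV u"
    and descent: "\<forall>\<^sub>F s in at_right 0. u (Y2 (Y1 x s) s) < u x"
  shows "STLA \<sigma> {y. u y \<le> u x} x"
  unfolding STLA_def
proof (intro allI impI)
  fix t :: real
  assume "0 < t"
  then have "0 < min T (t / 2)"
    using \<open>0 < T\<close> by simp
  from eventually_happens'[OF _ eventually_conj[OF descent eventually_at_right_real[OF this]]]
  obtain s where s: "u (Y2 (Y1 x s) s) < u x" "s \<in> {0<..<min T (t / 2)}"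
    by auto
  then show "x \<in> interior (reach_set \<sigma> {y. u y \<le> u x} t)"
    by (intro interior_reach_set_two_switches[OF flows disp M lip a _ _ _ u s(1)]) auto
qed

lemma two_switch_descent:
  fixes \<sigma> :: "real^'n \<Rightarrow> real^'m^'n" and u :: "real^'n \<Rightarrow> real"
  assumes sigma_C1: "\<forall>i j. Ck 1 (\<lambda>x. \<sigma> x $ i $ j)"
    and u: "\<And>y. u differentiable (at y)" "\<And>j. partial j u differentiable (at x)"
    and orth: "\<forall>i. grad u x \<bullet> column i (\<sigma> x) = 0"
    and lip: "L-lipschitz_on (cball x 1) (vf \<sigma> a1)" "L-lipschitz_on (cball x 1) (vf \<sigma> a2)"
    and flows: "flow_on (vf \<sigma> a1) (cball x (3/4)) T Y1" "flow_on (vf \<sigma> a2) (cball x (3/4)) T Y2"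
    and disp: "\<forall>x0\<in>cball x (3/4). \<forall>t\<in>{0..T}. norm (Y1 x0 t - x0) \<le> M * t"
      "\<forall>x0\<in>cball x (3/4). \<forall>t\<in>{0..T}. norm (Y2 x0 t - x0) \<le> M * t"
    and M: "0 \<le> M" "M * T \<le> 1/4" and "0 < T"
    and pos: "0 < - ((hess u x *v (\<sigma> x *v (a1 + a2))) \<bullet> (\<sigma> x *v (a1 + a2)))
      - ((jac (vf \<sigma> (a1 + a2)) x *v (\<sigma> x *v (a1 + a2)) + lie_bracket (vf \<sigma> a1) (vf \<sigma> a2) x)
        \<bullet> grad u x)"
  shows "\<forall>\<^sub>F s in at_right 0. u (Y2 (Y1 x s) s) < u x"
proof (rule second_order_descent[OF second_order_taylor[OF u] matrix_vector_mul_bounded_linear])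
  have v: "\<sigma> x *v (a1 + a2) = vf \<sigma> a1 x + vf \<sigma> a2 x"
    by (simp add: vf_def matrix_vector_right_distrib)
  then show "grad u x \<bullet> (vf \<sigma> a1 x + vf \<sigma> a2 x) = 0"
    using inner_matrix_vector_mult_eq_0[of "grad u x" "\<sigma> x" "a1 + a2"] orth by simp
  show "\<forall>\<^sub>F s in at_right 0. norm (Y2 (Y1 x s) s - x - s *\<^sub>R (vf \<sigma> a1 x + vf \<sigma> a2 x) - s\<^sup>2 *\<^sub>R
      ((1/2) *\<^sub>R (jac (vf \<sigma> a1) x *v vf \<sigma> a1 x) + jac (vf \<sigma> a2) x *v vf \<sigma> a1 x
        + (1/2) *\<^sub>R (jac (vf \<sigma> a2) x *v vf \<sigma> a2 x))) \<le> \<eta> * s\<^sup>2" if "0 < \<eta>" for \<eta>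
    using two_switch_endpoint_expansion[OF lip vf_has_derivative[OF sigma_C1]
        vf_has_derivative[OF sigma_C1] flows disp M \<open>0 < T\<close> that] .
  show "grad u x \<bullet> ((1/2) *\<^sub>R (jac (vf \<sigma> a1) x *v vf \<sigma> a1 x) + jac (vf \<sigma> a2) x *v vf \<sigma> a1 x
        + (1/2) *\<^sub>R (jac (vf \<sigma> a2) x *v vf \<sigma> a2 x))
      + (hess u x *v (vf \<sigma> a1 x + vf \<sigma> a2 x)) \<bullet> (vf \<sigma> a1 x + vf \<sigma> a2 x) / 2 < 0"
    using pos[unfolded jac_sum_plus_lie_bracket[OF sigma_C1], unfolded v]
    by (simp add: inner_commute)
qed

theorem theorem1:
  fixes \<sigma> :: "real^'n \<Rightarrow> real^'m^'n" and u :: "real^'n \<Rightarrow> real" and xb :: "real^'n"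
  assumes sigma_C2: "\<forall>i j. Ck 2 (\<lambda>x. \<sigma> x $ i $ j)"
    and u_C3: "Ck 3 u"
    and orth: "\<forall>i. grad u xb \<bullet> column i (\<sigma> xb) = 0"
    and pos: "\<exists>a1 a2. norm a1 \<le> 1 \<and> norm a2 \<le> 1 \<and>
       (let v = \<sigma> xb *v (a1 + a2) in
         - ((hess u xb *v v) \<bullet> v)
         - ((jac (vf \<sigma> (a1 + a2)) xb *v v + lie_bracket (vf \<sigma> a1) (vf \<sigma> a2) xb) \<bullet> grad u xb)) > 0"
  shows "STLA \<sigma> {x. u x \<le> u xb} xb"
proof -
  obtain a1 a2 where a: "norm a1 \<le> 1" "norm a2 \<le> 1"
    and Q: "0 < - ((hess u xb *v (\<sigma> xb *v (a1 + a2))) \<bullet> (\<sigma> xb *v (a1 + a2)))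
      - ((jac (vf \<sigma> (a1 + a2)) xb *v (\<sigma> xb *v (a1 + a2)) + lie_bracket (vf \<sigma> a1) (vf \<sigma> a2) xb)
        \<bullet> grad u xb)"
    using pos by (auto simp: Let_def)
  have sigma_C1: "\<forall>i j. Ck 1 (\<lambda>x. \<sigma> x $ i $ j)"
    using sigma_C2 Ck_Suc_imp_Ck[of 1] unfolding Suc_1 by blast
  have u: "\<And>y. u differentiable (at y)" "\<And>j. partial j u differentiable (at xb)"
    using u_C3 by (simp_all add: numeral_3_eq_3)
  obtain L M T where lip: "\<And>a. norm a \<le> 1 \<Longrightarrow> L-lipschitz_on (cball xb 1) (vf \<sigma> a)"
    and M: "0 \<le> M" and T: "0 < T" "M * T \<le> 1/4"
    and flows: "\<And>a. norm a \<le> 1 \<Longrightarrow> \<exists>Y. flow_on (vf \<sigma> a) (cball xb (3/4)) T Y \<and>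
      (\<forall>x0\<in>cball xb (3/4). \<forall>t\<in>{0..T}. norm (Y x0 t - x0) \<le> M * t) \<and>
      (\<forall>t. 2-lipschitz_on UNIV (\<lambda>x0. Y x0 t))"
    by (rule vf_local_flows_exist[OF sigma_C1, where x=xb], rule that)
  obtain Y1 Y2 where Y1: "flow_on (vf \<sigma> a1) (cball xb (3/4)) T Y1"
      "\<forall>x0\<in>cball xb (3/4). \<forall>t\<in>{0..T}. norm (Y1 x0 t - x0) \<le> M * t"
      "\<And>t. 2-lipschitz_on UNIV (\<lambda>x0. Y1 x0 t)"
    and Y2: "flow_on (vf \<sigma> a2) (cball xb (3/4)) T Y2"
      "\<forall>x0\<in>cball xb (3/4). \<forall>t\<in>{0..T}. norm (Y2 x0 t - x0) \<le> M * t"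
      "\<And>t. 2-lipschitz_on UNIV (\<lambda>x0. Y2 x0 t)"
    using flows[OF a(1)] flows[OF a(2)] by blast
  have "continuous_on UNIV u"
    using u(1) by (simp add: continuous_at_imp_continuous_on differentiable_imp_continuous_within)
  then show ?thesis
    using two_switch_descent[OF sigma_C1 u orth lip[OF a(1)] lip[OF a(2)] Y1(1) Y2(1) Y1(2) Y2(2)
        M T(2,1) Q]
    by (rule STLA_if_two_switch_descent[OF Y1(1) Y2(1) Y1(2) M T(2,1) Y1(3) Y2(3) a])
qed

end
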